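(* Let $m,n,d,e,k$ be positive integers with $m=2n$, $e=\gcd(n,d)=\gcd(m,d)$ and $1\le k\le \frac{n}{e}$, and let $C$ be the binary code described in the context. If $c\in C$ is nonzero, then \[{\rm DC}(c)\in\{-1\}\cup\{-1\pm 2^{\frac{m}{2}+je}\mid j=0,1,\dots,k-1\}.\]
   Context: For $\vec a=(a_0,a_1,\dots,a_k)\in\mathbb{F}_{2^n}\times\mathbb{F}_{2^m}^k$ define $Q_{\vec a}:\mathbb{F}_{2^m}\to\mathbb{F}_{2^e}$ by \[Q_{\vec a}(x)={\rm Tr}_{\mathbb{F}_{2^n}/\mathbb{F}_{2^e}}\big(a_0x^{2^{nd/e}+1}\big)+\sum_{j=1}^{k-1}{\rm Tr}_{\mathbb{F}_{2^m}/\mathbb{F}_{2^e}}\big(a_jx^{2^{(\frac{n}{e}-j)d}+1}\big)+{\rm Tr}_{\mathbb{F}_{2^m}/\mathbb{F}_{2^e}}(a_kx).\] Here $x^{2^{nd/e}+1}\in\mathbb{F}_{2^n}$ for $x\in\mathbb{F}_{2^m}$. Let $\pi$ be a primitive element of $\mathbb{F}_{2^m}$. For each $\vec a$, let $c_{\vec a}=(c_{\vec a,0},\dots,c_{\vec a,2^m-2})\in\mathbb{F}_2^{2^m-1}$ with $c_{\vec a,i}={\rm Tr}_{\mathbb{F}_{2^e}/\mathbb{F}_2}(Q_{\vec a}(\pi^{-i}))$. Then $C=\{c_{\vec a}\mid \vec a\in\mathbb{F}_{2^n}\times\mathbb{F}_{2^m}^k\}$. Equivalently, $C$ is the $\mathbb{F}_2$-span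 of all cyclic shifts of an m-sequence $s$ of length $2^m-1$ and of its decimations by $2^{(\frac{n}{e}-j)d}+1$, $0\le j<k$. For $c=(c_0,\dots,c_{2^m-2})\in C$, the DC component is ${\rm DC}(c)=\sum_{i=0}^{2^m-2}(-1)^{c_i}$. *)

theory Defs
  imports Main
begin

text \<open>The field F_{2^m} is modelled by a finite field type 'a with CARD('a) = 2^m.
  For s dividing t, the relative trace Tr_{F_{2^t}/F_{2^s}}(x) = sum_{i < t/s} x^(2^(s*i)).\<close>
definition trace :: "nat \<Rightarrow> nat \<Rightarrow> 'a::field \<Rightarrow> 'a" where
  "trace t s x = (\<Sum>i<t div s. x ^ (2 ^ (s * i)))"

definition primitive_elem :: "'a::field \<Rightarrow> bool" where
  "primitive_elem \<pi> \<longleftrightarrow> \<pi> \<noteq> 0 \<and> (\<forall>y. y \<noteq> 0 \<longrightarrow> (\<exists>i::nat. y = \<pi> ^ i))"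

definition Qf :: "nat \<Rightarrow> nat \<Rightarrow> nat \<Rightarrow> nat \<Rightarrow> nat \<Rightarrow> 'a::field \<Rightarrow> (nat \<Rightarrow> 'a) \<Rightarrow> 'a \<Rightarrow> 'a" where
  "Qf m n d e k a0 a x =
     trace n e (a0 * x ^ (2 ^ (n * d div e) + 1))
   + (\<Sum>j\<in>{1..<k}. trace m e (a j * x ^ (2 ^ ((n div e - j) * d) + 1)))
   + trace m e (a k * x)"

text \<open>Codeword c_a as a list of bits (True = 1) of length 2^m - 1.\<close>
definition codeword :: "nat \<Rightarrow> nat \<Rightarrow> nat \<Rightarrow> nat \<Rightarrow> nat \<Rightarrow> 'a::field \<Rightarrow> 'a \<Rightarrow> (nat \<Rightarrow> 'a) \<Rightarrow> bool list" where
  "codeword m n d e k \<pi> a0 a =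
     map (\<lambda>i. trace e 1 (Qf m n d e k a0 a (inverse \<pi> ^ i)) = 1) [0..<2 ^ m - 1]"

text \<open>The code C: a0 ranges over F_{2^n} = {x. x^(2^n) = x}, a 1..a k over F_{2^m}.\<close>
definition code :: "nat \<Rightarrow> nat \<Rightarrow> nat \<Rightarrow> nat \<Rightarrow> nat \<Rightarrow> 'a::field \<Rightarrow> bool list set" where
  "code m n d e k \<pi> = {codeword m n d e k \<pi> a0 a | a0 a. a0 ^ (2 ^ n) = a0}"

definition DC :: "bool list \<Rightarrow> int" where
  "DC c = (\<Sum>b\<leftarrow>c. if b then -1 else 1)"

end

theory Submission
  imports Defs "HOL-Computational_Algebra.Polynomial"
begin

text \<open>
  Write \<open>chi x = (-1)^Tr(Q x)\<close> for the quadratic function \<open>Q = Q_a\<close> with values in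
  \<open>F_(2^e)\<close>; then \<open>DC(c_a) = S - 1\<close> with \<open>S\<close> the sum of \<open>chi\<close> over the whole field.
  The polar form of \<open>Q\<close> is \<open>B x z = Tr(x * L z)\<close> for an \<open>F_(2^e)\<close>-linear map \<open>L\<close>, and
  squaring \<open>S\<close> gives \<open>S = 0\<close> or \<open>S^2 = 2^m * |W|\<close>, where \<open>W = ker L\<close> is the radical of
  \<open>B\<close> and \<open>Tr(Q)\<close> vanishes on \<open>W\<close>. As \<open>B\<close> is alternating, \<open>2^m / |W|\<close> is an even power of
  \<open>2^e\<close>, so \<open>|W| = 2^(2ej)\<close> and \<open>S = \<plusminus>2^(m/2 + je)\<close>. If \<open>c_a \<noteq> 0\<close>, then \<open>Tr(Q)\<close>
  does not vanish identically, so \<open>W\<close> is a proper subspace and \<open>L \<noteq> 0\<close>. A suitable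
  Frobenius power of \<open>L\<close> is a \<open>2^d\<close>-linearized polynomial of \<open>2^d\<close>-degree at most \<open>2(k - 1)\<close>,
  which has at most \<open>2^(2e(k - 1))\<close> roots because \<open>gcd(m, d) = e\<close>; hence \<open>j < k\<close>.
\<close>

section \<open>Frobenius powers and linearized polynomials\<close>

definition frob :: "nat \<Rightarrow> 'a::comm_semiring_1 \<Rightarrow> 'a" where
  "frob s x = x ^ 2 ^ s"

lemma frob_0 [simp]: "frob 0 x = x"
  by (simp add: frob_def)

lemma frob_zero [simp]: "frob s 0 = 0"
  by (simp add: frob_def zero_power)

lemma frob_mult: "frob s (x * y) = frob s x * frob s y"
  by (simp add: frob_def power_mult_distrib)

lemma frob_frob: "frob s (frob t x) = frob (s + t) x"
  by (simp add: frob_def power_add power_mult[symmetric] mult.commute)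

lemma frob_eq_0_iff [simp]: "frob s (x::'a::idom) = 0 \<longleftrightarrow> x = 0"
  by (simp add: frob_def)

lemma frob_inverse: "frob s (inverse x) = inverse (frob s (x::'a::field))"
  by (simp add: frob_def power_inverse)

lemma trace_eq_sum_frob: "trace t s x = (\<Sum>i<t div s. frob (s * i) x)"
  by (simp add: trace_def frob_def)

lemma card_roots_sum_powers_le:
  assumes "finite S" "S \<noteq> {}"
  shows "card {x::'a::idom. (\<Sum>t\<in>S. x ^ t) = 0} \<le> Max S"
proof -
  define p :: "'a poly" where "p = (\<Sum>t\<in>S. monom 1 t)"
  have poly_p: "poly p x = (\<Sum>t\<in>S. x ^ t)" for x
    by (simp add: p_def poly_sum poly_monom)
  have "coeff p (Max S) = 1"
    using assms by (simp add: p_def coeff_sum)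
  then have "p \<noteq> 0" by auto
  have "degree p \<le> Max S"
    unfolding p_def by (rule degree_sum_le) (use assms in \<open>auto simp: degree_monom_eq\<close>)
  with card_poly_roots_bound[OF \<open>p \<noteq> 0\<close>] show ?thesis
    by (simp add: poly_p)
qed

lemma of_nat_card_UNIV: "(of_nat (card (UNIV :: 'a::{finite,comm_ring_1} set)) :: 'a) = 0"
proof -
  have "(\<Sum>x\<in>UNIV. x + 1) = (\<Sum>x\<in>UNIV. x :: 'a)"
    by (rule sum.reindex_bij_betw)
      (auto simp: bij_betw_def inj_on_def image_def intro: exI[of _ "x - 1" for x])
  then show ?thesis by (simp add: sum.distrib)
qed

lemma power_two_pow_plus_one: "x ^ (2 ^ s + 1) = frob s x * x"
  by (simp add: frob_def mult.commute)

lemma card_fiber_le_card_kernel: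
  fixes \<psi> :: "'a::{ab_group_add,finite} \<Rightarrow> 'b::ab_group_add"
  assumes additive: "\<And>x y. \<psi> (x + y) = \<psi> x + \<psi> y"
  shows "card {z. \<psi> z = v} \<le> card {z. \<psi> z = 0}"
proof (cases "\<exists>z0. \<psi> z0 = v")
  case True
  then obtain z0 where z0: "\<psi> z0 = v" ..
  have \<psi>_diff: "\<psi> (x - y) = \<psi> x - \<psi> y" for x y
    using additive[of "x - y" y] by (simp add: algebra_simps)
  have "{z. \<psi> z = v} \<subseteq> (\<lambda>k. z0 + k) ` {z. \<psi> z = 0}"
  proof
    fix z assume "z \<in> {z. \<psi> z = v}"
    then have "\<psi> (z - z0) = 0"
      using z0 by (simp add: \<psi>_diff)
    then show "z \<in> (\<lambda>k. z0 + k) ` {z. \<psi> z = 0}"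
      by (intro image_eqI[of _ _ "z - z0"]) auto
  qed
  then have "card {z. \<psi> z = v} \<le> card ((\<lambda>k. z0 + k) ` {z. \<psi> z = 0})"
    by (intro card_mono) auto
  also have "\<dots> \<le> card {z. \<psi> z = 0}"
    by (rule card_image_le) auto
  finally show ?thesis .
qed simp

definition linearized :: "nat \<Rightarrow> (nat \<Rightarrow> 'a) \<Rightarrow> nat \<Rightarrow> 'a \<Rightarrow> 'a::comm_semiring_1" where
  "linearized d c R z = (\<Sum>i\<le>R. c i * frob (d * i) z)"

lemma linearized_zero [simp]: "linearized d c R 0 = 0"
  by (simp add: linearized_def)

definition is_linearized :: "nat \<Rightarrow> nat \<Rightarrow> ('a::comm_semiring_1 \<Rightarrow> 'a) \<Rightarrow> bool" where
  "is_linearized d R f \<longleftrightarrow> (\<exists>c. \<forall>z. f z = linearized d c R z)"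

lemma is_linearized_monomial:
  assumes "i \<le> R"
  shows "is_linearized d R (\<lambda>z. b * frob (d * i) z)"
proof -
  have "(\<Sum>j\<le>R. (if j = i then b else 0) * frob (d * j) z)
      = (\<Sum>j\<le>R. if j = i then b * frob (d * i) z else 0)" for z
    by (intro sum.cong) auto
  then have "(\<Sum>j\<le>R. (if j = i then b else 0) * frob (d * j) z) = b * frob (d * i) z" for z
    using assms by simp
  then show ?thesis
    unfolding is_linearized_def linearized_def by metis
qed

lemma is_linearized_add:
  assumes "is_linearized d R f" "is_linearized d R g"
  shows "is_linearized d R (\<lambda>z. f z + g z)"
proof -
  obtain c c' where "\<And>z. f z = linearized d c R z" "\<And>z. g z = linearized d c' R z"
    using assms by (auto simp: is_linearized_def)
  then have "f z + g z = linearized d (\<lambda>i. c i + c' i) R z" for z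
    by (simp add: linearized_def distrib_right sum.distrib)
  then show ?thesis
    unfolding is_linearized_def by blast
qed

lemma is_linearized_sum:
  "(\<And>j. j \<in> J \<Longrightarrow> is_linearized d R (f j)) \<Longrightarrow> is_linearized d R (\<lambda>z. \<Sum>j\<in>J. f j z)"
proof (induction J rule: infinite_finite_induct)
  case (infinite J)
  then show ?case
    using is_linearized_monomial[of 0 R d 0] by simp
next
  case empty
  then show ?case
    using is_linearized_monomial[of 0 R d 0] by simp
next
  case (insert j J)
  then show ?case
    by (simp add: is_linearized_add)
qed

section \<open>Alternating forms\<close>

locale alternating_form =
  fixes K :: "'a::{field,finite} set" and B :: "'a \<Rightarrow> 'a \<Rightarrow> 'a"
  assumes additive: "B x (y + z) = B x y + B x z"
    and homogeneous: "a \<in> K \<Longrightarrow> B x (a * z) = a * B x z"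
    and symmetric: "B x z = B z x"
    and alternating: "B x x = 0"
    and values_in_K: "B x z \<in> K"
    and inverse_in_K: "a \<in> K \<Longrightarrow> inverse a \<in> K"
begin

definition subspace :: "'a set \<Rightarrow> bool" where
  "subspace V \<longleftrightarrow> 0 \<in> V \<and> (\<forall>x\<in>V. \<forall>y\<in>V. x + y \<in> V \<and> x - y \<in> V) \<and> (\<forall>a\<in>K. \<forall>x\<in>V. a * x \<in> V)"

definition radical :: "'a set \<Rightarrow> 'a set" where
  "radical V = {z\<in>V. \<forall>v\<in>V. B v z = 0}"

lemma additive_left: "B (x + y) z = B x z + B y z"
  by (metis additive symmetric)

lemma homogeneous_left: "a \<in> K \<Longrightarrow> B (a * x) z = a * B x z"
  by (metis homogeneous symmetric)

lemma diff: "B x (y - z) = B x y - B x z"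
  using additive[of x "y - z" z] by (simp add: algebra_simps)

lemma zero_right [simp]: "B x 0 = 0"
  using diff[of x 0 0] by simp

lemma hyperbolic_split:
  assumes V: "subspace V" and x: "x \<in> V" and y: "y \<in> V" and xy: "B x y = 1"
  defines "V' \<equiv> {z\<in>V. B x z = 0 \<and> B y z = 0}"
  shows "subspace V'" and "V' \<subset> V" and "card V = card K * card K * card V'"
    and "radical V' = radical V"
proof -
  have yx: "B y x = 1"
    using xy symmetric by metis
  \<comment> \<open>\<open>V\<close> is the orthogonal sum of the hyperbolic plane spanned by \<open>x, y\<close> and \<open>V'\<close>.\<close>
  define h where "h p = fst (fst p) * y + snd (fst p) * x + snd p" for p :: "('a \<times> 'a) \<times> 'a"
  define coord where "coord z = (B x z, B y z)" for z
  have h_V: "h p \<in> V" if "p \<in> (K \<times> K) \<times> V'" for p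
    using that V x y by (auto simp: h_def V'_def subspace_def)
  have coord_h: "coord (h p) = fst p" if "p \<in> (K \<times> K) \<times> V'" for p
    using that by (auto simp: coord_def h_def V'_def additive homogeneous alternating xy yx)
  have coord_K: "coord z \<in> K \<times> K" for z
    by (simp add: coord_def values_in_K)
  have proj: "h (coord z, 0) \<in> V \<and> z - h (coord z, 0) \<in> V'" if "z \<in> V" for z
  proof -
    have "h (coord z, 0) \<in> V"
      using V x y coord_K[of z] by (auto simp: h_def subspace_def mem_Times_iff)
    with that show ?thesis
      using V by (auto simp: V'_def subspace_def diff h_def coord_def additive homogeneous
          alternating xy yx values_in_K)
  qed
  show "subspace V'"
    using V by (auto simp: subspace_def V'_def additive diff homogeneous)
  have "x \<notin> V'"
    using yx by (simp add: V'_def)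
  then show "V' \<subset> V"
    using x by (auto simp: V'_def)
  have "bij_betw h ((K \<times> K) \<times> V') V"
  proof (rule bij_betw_byWitness[where f' = "\<lambda>z. (coord z, z - h (coord z, 0))"])
    show "\<forall>p\<in>(K \<times> K) \<times> V'. (coord (h p), h p - h (coord (h p), 0)) = p"
      using coord_h by (simp add: h_def prod_eq_iff)
    show "\<forall>z\<in>V. h (coord z, z - h (coord z, 0)) = z"
      by (simp add: h_def)
    show "h ` ((K \<times> K) \<times> V') \<subseteq> V"
      using h_V by auto
    show "(\<lambda>z. (coord z, z - h (coord z, 0))) ` V \<subseteq> (K \<times> K) \<times> V'"
      using proj coord_K by (simp add: image_subset_iff)
  qed
  then show "card V = card K * card K * card V'"
    by (simp add: bij_betw_same_card[symmetric] card_cartesian_product)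
  show "radical V' = radical V"
  proof
    show "radical V \<subseteq> radical V'"
      using x y \<open>V' \<subset> V\<close> by (auto simp: radical_def V'_def symmetric)
    show "radical V' \<subseteq> radical V"
    proof
      fix z assume z: "z \<in> radical V'"
      then have "z \<in> V" "B x z = 0" "B y z = 0"
        by (auto simp: radical_def V'_def)
      have "B u z = 0" if "u \<in> V" for u
      proof -
        have "B (u - h (coord u, 0)) z = 0"
          using z proj[OF \<open>u \<in> V\<close>] by (auto simp: radical_def)
        moreover have "B (h (coord u, 0)) z = 0"
          using coord_K[of u] \<open>B x z = 0\<close> \<open>B y z = 0\<close>
          by (auto simp: h_def additive_left homogeneous_left)
        ultimately show ?thesis
          using additive_left[of "u - h (coord u, 0)" "h (coord u, 0)" z] by simp
      qed
      with \<open>z \<in> V\<close> show "z \<in> radical V"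
        by (simp add: radical_def)
    qed
  qed
qed

theorem card_subspace_eq_radical_times_square:
  "subspace V \<Longrightarrow> \<exists>s. card V = card (radical V) * card K ^ (2 * s)"
proof (induction "card V" arbitrary: V rule: less_induct)
  case less
  show ?case
  proof (cases "radical V = V")
    case True
    then show ?thesis by (intro exI[of _ 0]) simp
  next
    case False
    then obtain x v where x: "x \<in> V" and v: "v \<in> V" "B v x \<noteq> 0"
      by (auto simp: radical_def)
    define y where "y = inverse (B v x) * v"
    have y: "y \<in> V"
      using less.prems v by (simp add: y_def subspace_def inverse_in_K values_in_K)
    have xy: "B x y = 1"
      using v by (simp add: y_def homogeneous_left inverse_in_K values_in_K symmetric[of x])
    note split = hyperbolic_split[OF less.prems x y xy]
    obtain s where "card {z\<in>V. B x z = 0 \<and> B y z = 0} = card (radical V) * card K ^ (2 * s)"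
      using less.hyps[OF psubset_card_mono[OF _ split(2)] split(1)] split(4) by auto
    with split(3) show ?thesis
      by (intro exI[of _ "Suc s"]) (simp add: algebra_simps)
  qed
qed

end

section \<open>Sign sums of quadratic functions\<close>

lemma sum_eq_0_if_translation_negates:
  fixes g :: "'a::ab_group_add \<Rightarrow> int"
  assumes "bij_betw (\<lambda>x. x + x0) G G" "\<And>x. x \<in> G \<Longrightarrow> g (x + x0) = - g x"
  shows "sum g G = 0"
proof -
  have "sum g G = (\<Sum>x\<in>G. g (x + x0))"
    by (rule sum.reindex_bij_betw[OF assms(1), symmetric])
  also have "\<dots> = - sum g G"
    using assms(2) by (simp add: sum_negf)
  finally show ?thesis by simp
qed

definition polarization :: "('a::ab_group_add \<Rightarrow> int) \<Rightarrow> 'a \<Rightarrow> 'a \<Rightarrow> int" where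
  "polarization f x z = f (x + z) * f x * f z"

lemma polarization_commute: "polarization f x z = polarization f z x"
  by (simp add: polarization_def add.commute mult.commute)

theorem sum_quadratic_sign:
  fixes f :: "'a::{ab_group_add,finite} \<Rightarrow> int"
  assumes sign: "\<And>x. f x = 1 \<or> f x = -1"
    and multiplicative: "\<And>x y z. polarization f (x + y) z = polarization f x z * polarization f y z"
  defines "W \<equiv> {z. \<forall>x. polarization f x z = 1}"
  shows "(\<Sum>x\<in>UNIV. f x) = 0
    \<or> ((\<Sum>x\<in>UNIV. f x)\<^sup>2 = int (card (UNIV :: 'a set)) * int (card W) \<and> (\<forall>z\<in>W. f z = 1))"
proof -
  have square: "f x * f x = 1" for x
    using sign[of x] by auto
  have pol_sign: "polarization f x z = 1 \<or> polarization f x z = -1" for x z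
    using sign[of "x + z"] sign[of x] sign[of z] by (auto simp: polarization_def)
  have translation: "bij_betw (\<lambda>x. x + x0) A A" if "\<And>x. x \<in> A \<Longrightarrow> x + x0 \<in> A \<and> x - x0 \<in> A"
    for A and x0 :: 'a
    by (rule bij_betw_byWitness[where f' = "\<lambda>x. x - x0"]) (use that in auto)
  have character_sum: "(\<Sum>x\<in>UNIV. polarization f x z) = (if z \<in> W then int (card (UNIV :: 'a set)) else 0)"
    for z
  proof (cases "z \<in> W")
    case False
    then obtain x0 where "polarization f x0 z = -1"
      using pol_sign by (auto simp: W_def)
    then have "(\<Sum>x\<in>UNIV. polarization f x z) = 0"
      using translation[of UNIV x0] multiplicative
      by (intro sum_eq_0_if_translation_negates[of x0]) auto
    with False show ?thesis by simp
  qed (simp add: W_def)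
  have "(\<Sum>x\<in>UNIV. f x)\<^sup>2 = (\<Sum>x\<in>UNIV. \<Sum>z\<in>UNIV. f x * f (x + z))"
  proof -
    have "(\<Sum>y\<in>UNIV. f x * f y) = (\<Sum>z\<in>UNIV. f x * f (x + z))" for x
      using sum.reindex_bij_betw[OF translation[of UNIV x], of "\<lambda>y. f x * f y"]
      by (simp add: add.commute)
    then show ?thesis
      by (simp add: power2_eq_square sum_product)
  qed
  also have "\<dots> = (\<Sum>z\<in>UNIV. f z * (\<Sum>x\<in>UNIV. polarization f x z))"
  proof -
    have "f z * polarization f x z = (f z * f z) * (f x * f (x + z))" for x z
      by (simp add: polarization_def algebra_simps)
    then show ?thesis
      by (subst sum.swap) (simp add: sum_distrib_left square)
  qed
  also have "\<dots> = (\<Sum>z\<in>W. f z) * int (card (UNIV :: 'a set))"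
    by (simp add: character_sum if_distrib sum.If_cases sum_distrib_right)
  finally have sum_square: "(\<Sum>x\<in>UNIV. f x)\<^sup>2 = sum f W * int (card (UNIV :: 'a set))" .
  show ?thesis
  proof (cases "\<forall>z\<in>W. f z = 1")
    case True
    then show ?thesis
      using sum_square by simp
  next
    case False
    \<comment> \<open>\<open>f\<close> restricted to the subgroup \<open>W\<close> is a character\<close>
    then obtain z0 where z0: "z0 \<in> W" "f z0 = -1"
      using sign by blast
    have W_iff: "z \<in> W \<longleftrightarrow> (\<forall>x. polarization f z x = 1)" for z
      by (simp add: W_def polarization_commute)
    have "x + z0 \<in> W \<and> x - z0 \<in> W" if "x \<in> W" for x
    proof -
      have "polarization f (x + z0) y = 1" for y
        using that z0(1) by (simp add: W_iff multiplicative)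
      moreover have "polarization f (x - z0) y = 1" for y
        using multiplicative[of "x - z0" z0 y] that z0(1) by (simp add: W_iff)
      ultimately show ?thesis
        by (simp add: W_iff)
    qed
    moreover have "f (x + z0) = - f x" for x
    proof -
      have "polarization f x z0 = 1"
        using z0(1) by (simp add: W_def)
      then show ?thesis
        using z0(2) sign[of x] sign[of "x + z0"] by (auto simp: polarization_def)
    qed
    ultimately have "sum f W = 0"
      using translation[of W z0] by (intro sum_eq_0_if_translation_negates[of z0]) auto
    then show ?thesis
      using sum_square by simp
  qed
qed

section \<open>Finite fields of characteristic two\<close>

text \<open>The sign \<open>(-1)^u\<close> of an element \<open>u\<close> of the prime field; other values are irrelevant.\<close>

definition sign_bit :: "'a::one \<Rightarrow> int" where
  "sign_bit u = (if u = 1 then -1 else 1)"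

locale gf2m =
  fixes m :: nat and \<pi> :: "'a::{field,finite}"
  assumes card_UNIV: "card (UNIV :: 'a set) = 2 ^ m"
    and primitive: "primitive_elem \<pi>"
begin

lemma m_pos: "0 < m"
proof -
  have "card {0, 1::'a} \<le> card (UNIV :: 'a set)"
    by (rule card_mono) auto
  then show ?thesis
    by (cases m) (simp_all add: card_UNIV)
qed

lemma two_eq_zero: "(2::'a) = 0"
  using of_nat_card_UNIV[where 'a='a] m_pos by (simp add: card_UNIV)

lemma add_self [simp]: "(x::'a) + x = 0"
  using two_eq_zero by (simp flip: mult_2)

lemma add_eq_0_iff_eq: "(x::'a) + y = 0 \<longleftrightarrow> x = y"
  by (metis add_self add_right_cancel)

lemma power_card_UNIV: "(x::'a) ^ 2 ^ m = x"
proof (cases "x = 0")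
  case True
  then show ?thesis by simp
next
  case False
  let ?U = "UNIV - {0::'a}"
  have "(\<Prod>y\<in>?U. x * y) = (\<Prod>y\<in>?U. y)"
    by (rule prod.reindex_bij_betw)
      (use False in \<open>auto simp: bij_betw_def inj_on_def image_def intro!: bexI[of _ "y / x" for y]\<close>)
  then have "x ^ card ?U = 1"
    by (simp add: prod.distrib)
  moreover have "card ?U = 2 ^ m - 1"
    by (simp add: card_UNIV card_Diff_singleton)
  ultimately show ?thesis
    by (metis power_Suc2 Suc_pred' mult_1 pos2 zero_less_power)
qed

lemma frob_m [simp]: "frob m (x::'a) = x"
  by (simp add: frob_def power_card_UNIV)

lemma frob_add_mult_m: "frob (s + m * t) (x::'a) = frob s x"
  by (induction t) (simp_all flip: frob_frob add.assoc)

lemma frob_add: "frob s ((x::'a) + y) = frob s x + frob s y"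
proof (induction s)
  case (Suc s)
  have "frob (Suc s) z = (frob s z)\<^sup>2" for z :: 'a
    by (simp add: frob_def power_mult[symmetric] mult.commute)
  with Suc show ?case
    by (simp add: power2_sum two_eq_zero)
qed simp

lemma frob_diff: "frob s ((x::'a) - y) = frob s x - frob s y"
  using frob_add[of s "x - y" y] by (simp add: algebra_simps)

lemma frob_sum: "frob s (\<Sum>i\<in>I. f i) = (\<Sum>i\<in>I. frob s (f i :: 'a))"
  by (induction I rule: infinite_finite_induct) (simp_all add: frob_add)

lemma frob_fixed_mult: "frob s (y::'a) = y \<Longrightarrow> frob (s * u) y = y"
  by (induction u) (simp_all flip: frob_frob)

lemma frob_fixed_dvd: "frob s (y::'a) = y \<Longrightarrow> s dvd t \<Longrightarrow> frob t y = y"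
  using frob_fixed_mult by auto

lemma frob_fixed_gcd:
  assumes "frob d (y::'a) = y" "0 < d"
  shows "frob (gcd m d) y = y"
proof -
  obtain x t where xt: "d * x = m * t + gcd d m"
    using bezout_nat[of d m] \<open>0 < d\<close> by auto
  have "y = frob (d * x) y"
    using frob_fixed_mult[OF assms(1)] by simp
  also have "\<dots> = frob (gcd m d) y"
    using frob_add_mult_m[of "gcd d m" t y] by (simp add: xt add.commute gcd.commute)
  finally show ?thesis by simp
qed

lemma trace_add: "trace t s ((x::'a) + y) = trace t s x + trace t s y"
  by (simp add: trace_eq_sum_frob frob_add sum.distrib)

lemma trace_zero [simp]: "trace t s (0::'a) = 0"
  by (simp add: trace_eq_sum_frob)

lemma trace_sum: "trace t s (\<Sum>i\<in>I. f i) = (\<Sum>i\<in>I. trace t s (f i :: 'a))"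
  by (induction I rule: infinite_finite_induct) (simp_all add: trace_add)

lemma trace_scalar: "frob s (c::'a) = c \<Longrightarrow> trace t s (c * y) = c * trace t s y"
  using frob_fixed_mult[of s c] by (simp add: trace_eq_sum_frob frob_mult sum_distrib_left)

context
  fixes s t :: nat
  assumes s_dvd_t: "s dvd t" and s_pos: "0 < s"
begin

lemma trace_frob_eq:
  assumes "frob t (y::'a) = y"
  shows "trace t s (frob s y) = trace t s y"
proof -
  define f where "f i = frob (s * i) y" for i
  have "f (t div s) = f 0"
    using s_dvd_t assms by (simp add: f_def)
  then have "(\<Sum>i<t div s. f (Suc i)) = (\<Sum>i<t div s. f i)"
    using sum.lessThan_Suc_shift[of f "t div s"] by (simp add: add.commute)
  moreover have "frob (s * i) (frob s y) = f (Suc i)" for i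
    by (simp add: f_def frob_frob add.commute)
  ultimately show ?thesis
    by (simp add: trace_eq_sum_frob f_def)
qed

lemma trace_frob_mult_eq:
  assumes "frob t (y::'a) = y"
  shows "trace t s (frob (s * u) y) = trace t s y"
proof (induction u)
  case (Suc u)
  have "frob t (frob (s * u) y) = frob (s * u) (frob t y)"
    by (simp add: frob_frob add.commute)
  then have "frob t (frob (s * u) y) = frob (s * u) y"
    using assms by simp
  from trace_frob_eq[OF this] Suc show ?case
    by (simp add: frob_frob add.commute)
qed simp

lemma frob_trace:
  assumes "frob t (y::'a) = y"
  shows "frob s (trace t s y) = trace t s y"
proof -
  have "frob s (trace t s y) = trace t s (frob s y)"
    by (simp add: trace_eq_sum_frob frob_sum frob_frob add.commute)
  with trace_frob_eq[OF assms] show ?thesis by simp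
qed

lemma trace_double: "trace (2 * t) s (y::'a) = trace t s y + trace t s (frob t y)"
proof -
  obtain r where t: "t = s * r" using s_dvd_t by auto
  have "frob (s * (r + i)) y = frob (s * i) (frob t y)" for i
    by (simp add: t frob_frob distrib_left add.commute)
  moreover have "2 * t div s = r + r"
    using t s_pos by simp
  moreover have "(\<Sum>i<r + q. f i) = (\<Sum>i<r. f i) + (\<Sum>i<q. f (r + i))" for q and f :: "nat \<Rightarrow> 'a"
    by (induction q) (simp_all add: add.assoc)
  ultimately show ?thesis
    using t by (simp add: trace_eq_sum_frob)
qed

end

definition frob_inv where
  "frob_inv s (x::'a) = frob (m * s - s) x"

lemma frob_frob_inv:
  assumes "s \<le> t"
  shows "frob t (frob_inv s x) = frob (t - s) x"
proof -
  have "s \<le> m * s"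
    using m_pos by simp
  then have "t + (m * s - s) = (t - s) + m * s"
    using assms by simp
  then show ?thesis
    by (simp add: frob_inv_def frob_frob frob_add_mult_m)
qed

lemma frob_inv_frob: "frob_inv s (frob s x) = x"
  using frob_add_mult_m[of 0 s x] m_pos
  by (simp add: frob_inv_def frob_frob mult.commute)

lemma frob_inv_mult: "frob_inv s (x * y) = frob_inv s x * frob_inv s y"
  by (simp add: frob_inv_def frob_mult)

lemma frob_inv_add: "frob_inv s (x + y) = frob_inv s x + frob_inv s y"
  by (simp add: frob_inv_def frob_add)

lemma frob_inv_fixed_dvd: "frob s c = c \<Longrightarrow> s dvd t \<Longrightarrow> frob_inv t (c::'a) = c"
  unfolding frob_inv_def by (rule frob_fixed_dvd) (auto intro: dvd_diff_nat)

lemma trace_frob_adjoint: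
  assumes "e dvd m" "0 < e" "e dvd s"
  shows "trace m e (frob s x * y) = trace m e (x * frob_inv s y)"
proof -
  have "e dvd m * s - s"
    using assms by simp
  then obtain u where u: "m * s - s = e * u" ..
  have "trace m e (frob s x * y) = trace m e (frob_inv s (frob s x * y))"
    using trace_frob_mult_eq[OF assms(1,2), of "frob s x * y" u] by (simp add: frob_inv_def u)
  then show ?thesis
    by (simp add: frob_inv_mult frob_inv_frob)
qed

lemma power_primitive_order: "\<pi> ^ (2 ^ m - 1) = 1"
proof -
  have "\<pi> * \<pi> ^ (2 ^ m - 1) = \<pi> * 1"
    using power_card_UNIV[of \<pi>] by (simp flip: power_Suc)
  then show ?thesis
    using primitive by (simp add: primitive_elem_def)
qed

lemma bij_betw_primitive_powers: "bij_betw (\<lambda>i. \<pi> ^ i) {..<2 ^ m - 1} (UNIV - {0})"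
proof -
  have "\<exists>i<2 ^ m - 1. y = \<pi> ^ i" if "y \<noteq> 0" for y
  proof -
    obtain i where "y = \<pi> ^ i"
      using primitive \<open>y \<noteq> 0\<close> by (auto simp: primitive_elem_def)
    also have "\<dots> = (\<pi> ^ (2 ^ m - 1)) ^ (i div (2 ^ m - 1)) * \<pi> ^ (i mod (2 ^ m - 1))"
      by (simp flip: power_mult power_add)
    also have "\<dots> = \<pi> ^ (i mod (2 ^ m - 1))"
      by (simp only: power_primitive_order power_one mult_1)
    moreover have "0 < (2::nat) ^ m - 1"
      using one_less_power[of "2::nat" m] m_pos by simp
    ultimately show ?thesis
      by (intro exI[of _ "i mod (2 ^ m - 1)"]) simp
  qed
  then have image: "(\<lambda>i. \<pi> ^ i) ` {..<2 ^ m - 1} = UNIV - {0}"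
    using primitive by (auto simp: primitive_elem_def)
  moreover have "card ((\<lambda>i. \<pi> ^ i) ` {..<2 ^ m - 1}) = card {..<(2::nat) ^ m - 1}"
    unfolding image by (simp add: card_UNIV card_Diff_singleton)
  ultimately show ?thesis
    by (simp add: bij_betw_def eq_card_imp_inj_on)
qed

lemma card_frob_fixed_le:
  assumes "0 < e"
  shows "card {y::'a. frob e y = y} \<le> 2 ^ e"
proof -
  have "(1::nat) \<noteq> 2 ^ e"
    using one_less_power[of "2::nat" e] assms by simp
  then have "{y::'a. frob e y = y} = {y. (\<Sum>t\<in>{1, 2 ^ e}. y ^ t) = 0}"
    by (auto simp: frob_def add_eq_0_iff_eq)
  also have "card \<dots> \<le> Max {1, 2 ^ e}"
    by (rule card_roots_sum_powers_le) auto
  finally show ?thesis by simp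
qed

lemma card_frob_fixed:
  assumes "e dvd m" "0 < e"
  shows "card {y::'a. frob e y = y} = 2 ^ e"
proof (rule antisym)
  show "card {y::'a. frob e y = y} \<le> 2 ^ e"
    using card_frob_fixed_le[OF \<open>0 < e\<close>] .
  have "int (2 ^ e - 1) dvd int (2 ^ m - 1)"
    using power_diff_1_eq[of "(2::int) ^ e" "m div e"] assms
    by (simp flip: power_mult)
  then obtain g where g: "(2::nat) ^ m - 1 = (2 ^ e - 1) * g"
    by (auto simp only: int_dvd_int_iff)
  have g_pos: "0 < g"
    using g one_less_power[of "2::nat" m] m_pos by (cases g) auto
  define P where "P = (\<lambda>j. \<pi> ^ (g * j)) ` {..<2 ^ e - 1}"
  have "inj_on (\<lambda>j. g * j) {..<2 ^ e - 1}"
    using g_pos by (simp add: inj_on_def)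
  moreover have "(\<lambda>j. g * j) ` {..<2 ^ e - 1} \<subseteq> {..<2 ^ m - 1}"
    using g g_pos by (auto simp: mult.commute)
  ultimately have "inj_on (\<lambda>j. \<pi> ^ (g * j)) {..<2 ^ e - 1}"
    using bij_betw_primitive_powers
    by (auto simp: bij_betw_def intro: comp_inj_on[unfolded comp_def] inj_on_subset)
  then have card_P: "card P = 2 ^ e - 1"
    by (simp add: P_def card_image)
  have "y \<noteq> 0 \<and> frob e y = y" if "y \<in> P" for y
  proof -
    obtain j where y: "y = \<pi> ^ (g * j)"
      using \<open>y \<in> P\<close> by (auto simp: P_def)
    have "g * j * (2 ^ e - 1) = (2 ^ m - 1) * j"
      using g by (simp only: ac_simps)
    then have "y ^ (2 ^ e - 1) = (\<pi> ^ (2 ^ m - 1)) ^ j"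
      by (simp only: y flip: power_mult)
    then have "y ^ (2 ^ e - 1) = 1"
      by (simp only: power_primitive_order power_one)
    then have "y * y ^ (2 ^ e - 1) = y"
      by simp
    moreover have "y \<noteq> 0"
      using primitive by (simp add: y primitive_elem_def)
    ultimately show ?thesis
      by (simp add: frob_def flip: power_Suc)
  qed
  then have "insert 0 P \<subseteq> {y. frob e y = y}" and "0 \<notin> P"
    by auto
  then have "card (insert 0 P) \<le> card {y::'a. frob e y = y}"
    by (intro card_mono) auto
  then show "2 ^ e \<le> card {y::'a. frob e y = y}"
    using \<open>0 \<notin> P\<close> card_P by (simp add: P_def)
qed

lemma card_trace_roots_le:
  assumes "s dvd t" "0 < s" "0 < t"
  shows "card {y::'a. trace t s y = 0} \<le> 2 ^ (t - s)"
proof -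
  define S where "S = (\<lambda>i. (2::nat) ^ (s * i)) ` {..<t div s}"
  have "inj_on (\<lambda>i. (2::nat) ^ (s * i)) {..<t div s}"
    using assms by (auto simp: inj_on_def)
  then have trace_S: "trace t s y = (\<Sum>k\<in>S. y ^ k)" for y :: 'a
    by (simp add: trace_def S_def sum.reindex)
  have "0 < t div s"
    using assms by auto
  then have "Max S = 2 ^ (s * (t div s - 1))"
    using assms by (auto simp: S_def intro!: Max_eqI power_increasing)
  also have "s * (t div s - 1) = t - s"
    using assms by (simp add: diff_mult_distrib2)
  finally have "Max S = 2 ^ (t - s)" .
  moreover have "card {y::'a. (\<Sum>k\<in>S. y ^ k) = 0} \<le> Max S"
    using \<open>0 < t div s\<close> by (intro card_roots_sum_powers_le) (auto simp: S_def)
  ultimately show ?thesis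
    by (simp add: trace_S)
qed

lemma exists_trace_ne_0:
  assumes "s dvd t" "t dvd m" "0 < s"
  shows "\<exists>y::'a. frob t y = y \<and> trace t s y \<noteq> 0"
proof (rule ccontr)
  have "0 < t"
    using assms m_pos by (auto intro: dvd_pos_nat)
  assume "\<not> ?thesis"
  then have "{y::'a. frob t y = y} \<subseteq> {y. trace t s y = 0}"
    by auto
  then have "card {y::'a. frob t y = y} \<le> card {y::'a. trace t s y = 0}"
    by (intro card_mono) auto
  also have "\<dots> \<le> 2 ^ (t - s)"
    using card_trace_roots_le assms \<open>0 < t\<close> by blast
  finally show False
    using card_frob_fixed[OF assms(2) \<open>0 < t\<close>] assms \<open>0 < t\<close> by simp
qed

lemma linearized_right_division:
  fixes w :: 'a
  shows "\<exists>b r0. \<forall>z. linearized d c R z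
           = (\<Sum>i<R. b i * frob (d * i) (frob d z - w * z)) + r0 * z"
proof (induction R arbitrary: c)
  case 0
  show ?case by (auto simp: linearized_def)
next
  case (Suc R)
  define c' where "c' = c(R := c R + c (Suc R) * frob (d * R) w)"
  obtain b' r0 where IH: "\<And>z. linearized d c' R z
      = (\<Sum>i<R. b' i * frob (d * i) (frob d z - w * z)) + r0 * z"
    using Suc by blast
  define b where "b = b'(R := c (Suc R))"
  have "linearized d c (Suc R) z
      = (\<Sum>i<Suc R. b i * frob (d * i) (frob d z - w * z)) + r0 * z" for z
  proof -
    have "frob (d * R) (frob d z - w * z) = frob (d * Suc R) z - frob (d * R) w * frob (d * R) z"
      by (simp add: frob_diff frob_add frob_mult frob_frob add.commute)
    moreover have "(\<Sum>i<R. c' i * frob (d * i) z) = (\<Sum>i<R. c i * frob (d * i) z)"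
      by (simp add: c'_def)
    ultimately have "linearized d c (Suc R) z
        = linearized d c' R z + c (Suc R) * frob (d * R) (frob d z - w * z)"
      by (simp add: linearized_def c'_def flip: lessThan_Suc_atMost) (simp add: algebra_simps)
    then show ?thesis
      by (simp add: IH b_def)
  qed
  then show ?case by blast
qed

lemma card_frob_eigenvectors_le:
  assumes "u \<noteq> 0" "0 < d"
  shows "card {z::'a. frob d z = (frob d u / u) * z} \<le> 2 ^ gcd m d"
proof -
  have "{z. frob d z = (frob d u / u) * z} \<subseteq> (\<lambda>y. u * y) ` {y. frob d y = y}"
  proof
    fix z assume "z \<in> {z. frob d z = (frob d u / u) * z}"
    then have "frob d (z / u) = z / u"
      using assms by (simp add: frob_mult frob_inverse divide_inverse)
    then show "z \<in> (\<lambda>y. u * y) ` {y. frob d y = y}"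
      using assms by (auto intro!: image_eqI[of _ _ "z / u"])
  qed
  then have "card {z. frob d z = (frob d u / u) * z} \<le> card ((\<lambda>y. u * y) ` {y. frob d y = y})"
    by (intro card_mono) auto
  also have "\<dots> \<le> card {y::'a. frob d y = y}"
    by (rule card_image_le) auto
  also have "\<dots> \<le> card {y::'a. frob (gcd m d) y = y}"
    using \<open>0 < d\<close> by (intro card_mono) (auto intro: frob_fixed_gcd)
  also have "\<dots> \<le> 2 ^ gcd m d"
    using \<open>0 < d\<close> by (intro card_frob_fixed_le) simp
  finally show ?thesis .
qed

lemma card_roots_linearized_le:
  assumes "0 < d" "\<exists>z. linearized d c R z \<noteq> (0::'a)"
  shows "card {z. linearized d c R z = 0} \<le> 2 ^ (gcd m d * R)"
  using assms(2)
proof (induction R arbitrary: c)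
  case 0
  then have "{z. linearized d c 0 z = 0} = {0}"
    by (auto simp: linearized_def)
  then show ?case by simp
next
  case (Suc R)
  let ?U = "{z. linearized d c (Suc R) z = 0}"
  show ?case
  proof (cases "?U \<subseteq> {0}")
    case True
    then have "card ?U \<le> card {0::'a}"
      by (intro card_mono) auto
    also have "\<dots> \<le> 2 ^ (gcd m d * Suc R)"
      by simp
    finally show ?thesis .
  next
    case False
    then obtain u where u: "linearized d c (Suc R) u = 0" "u \<noteq> 0"
      by auto
    \<comment> \<open>Divide on the right by the additive map \<open>\<psi>\<close>, which vanishes at the root \<open>u\<close>;
      the fibres of \<open>\<psi>\<close> are cosets of a kernel of size at most \<open>2^gcd(m,d)\<close>.\<close>
    define \<psi> where "\<psi> z = frob d z - (frob d u / u) * z" for z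
    have \<psi>_add: "\<psi> (x + y) = \<psi> x + \<psi> y" for x y
      by (simp add: \<psi>_def frob_add distrib_left)
    obtain b r0 where division: "\<And>z. linearized d c (Suc R) z = linearized d b R (\<psi> z) + r0 * z"
      using linearized_right_division[of d c "Suc R" "frob d u / u"]
      by (auto simp: \<psi>_def linearized_def lessThan_Suc_atMost)
    have "\<psi> u = 0"
      using u by (simp add: \<psi>_def)
    then have "r0 = 0"
      using division[of u] u by simp
    then have U_eq: "?U = (\<Union>v\<in>{v. linearized d b R v = 0}. {z. \<psi> z = v})"
      using division by auto
    have "\<exists>z. linearized d b R z \<noteq> 0"
      using Suc.prems by (auto simp: division \<open>r0 = 0\<close>)
    then have IH: "card {v. linearized d b R v = 0} \<le> 2 ^ (gcd m d * R)"
      using Suc.IH by blast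
    have kernel: "card {z. \<psi> z = 0} \<le> 2 ^ gcd m d"
      using card_frob_eigenvectors_le[OF u(2) assms(1)] by (simp add: \<psi>_def)
    have "card ?U \<le> (\<Sum>v\<in>{v. linearized d b R v = 0}. card {z. \<psi> z = v})"
      unfolding U_eq by (rule card_UN_le) simp
    also have "\<dots> \<le> card {v. linearized d b R v = 0} * card {z. \<psi> z = 0}"
      using sum_bounded_above[of _ "\<lambda>v. card {z. \<psi> z = v}"]
        card_fiber_le_card_kernel[of \<psi>, OF \<psi>_add] by simp
    also have "\<dots> \<le> 2 ^ (gcd m d * R) * 2 ^ gcd m d"
      using IH kernel by (rule mult_mono) simp_all
    finally show ?thesis
      by (simp add: power_add[symmetric] algebra_simps)
  qed
qed

lemma trace_gold_polarization:
  assumes "e dvd m" "0 < e" "e dvd s"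
  shows "trace m e (c * (x + z) ^ (2 ^ s + 1))
    = trace m e (c * x ^ (2 ^ s + 1)) + trace m e (c * z ^ (2 ^ s + 1))
      + trace m e (x * (c * frob s z + frob_inv s (c * z)))"
proof -
  have "trace m e (c * frob s x * z) = trace m e (x * frob_inv s (c * z))"
    using trace_frob_adjoint[OF assms, of x "c * z"] by (simp add: ac_simps)
  then show ?thesis
    unfolding power_two_pow_plus_one frob_add by (simp add: trace_add algebra_simps)
qed

lemma trace_half_gold_polarization:
  assumes m: "m = 2 * n" and "e dvd n" "0 < e" and c: "frob n c = c"
  shows "trace n e (c * (x + z) ^ (2 ^ n + 1))
    = trace n e (c * x ^ (2 ^ n + 1)) + trace n e (c * z ^ (2 ^ n + 1))
      + trace m e (x * frob_inv n (c * z))"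
proof -
  \<comment> \<open>The two cross terms are conjugate over \<open>F_(2^n)\<close>, so their traces add up to a trace from \<open>F_(2^m)\<close>.\<close>
  define y where "y = c * frob n x * z"
  have "frob n (frob n x) = x"
    by (metis frob_frob frob_m m mult_2)
  then have "frob n y = c * frob n z * x"
    using c by (simp add: y_def frob_mult)
  moreover have "trace n e y + trace n e (frob n y) = trace m e y"
    using trace_double[OF \<open>e dvd n\<close> \<open>0 < e\<close>] m by simp
  moreover have "trace m e y = trace m e (x * frob_inv n (c * z))"
    using trace_frob_adjoint[of e n x "c * z"] assms by (simp add: y_def ac_simps)
  ultimately show ?thesis
    unfolding power_two_pow_plus_one frob_add by (simp add: trace_add algebra_simps y_def)
qed

lemma trace_bit:
  assumes "frob e (u::'a) = u" "0 < e"
  shows "trace e 1 u = 0 \<or> trace e 1 u = 1"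
proof -
  have "frob 1 (trace e 1 u) = trace e 1 u"
    using frob_trace[of 1 e u] assms by simp
  then have "trace e 1 u * (trace e 1 u - 1) = 0"
    by (simp add: frob_def algebra_simps power2_eq_square)
  then show ?thesis by simp
qed

lemma sum_inverse_primitive_powers:
  "(\<Sum>x\<in>UNIV. g x) = g (0::'a) + (\<Sum>i<2 ^ m - 1. g (inverse \<pi> ^ i))"
proof -
  have "bij_betw inverse (UNIV - {0::'a}) (UNIV - {0})"
    by (rule bij_betw_byWitness[where f' = inverse]) auto
  then have "bij_betw (\<lambda>i. inverse \<pi> ^ i) {..<2 ^ m - 1} (UNIV - {0})"
    using bij_betw_trans[OF bij_betw_primitive_powers] by (simp add: comp_def power_inverse)
  then have "(\<Sum>i<2 ^ m - 1. g (inverse \<pi> ^ i)) = (\<Sum>x\<in>UNIV - {0}. g x)"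
    by (rule sum.reindex_bij_betw)
  then show ?thesis
    by (simp add: sum.remove[of UNIV 0])
qed

lemma sign_bit_add:
  assumes "u = 0 \<or> u = 1" "v = 0 \<or> v = (1::'a)"
  shows "sign_bit (u + v) = sign_bit u * sign_bit v"
  using assms by (auto simp: sign_bit_def)

end

section \<open>The quadratic functions of the code\<close>

lemma power_two_eq_mult_power_two:
  assumes "(2::nat) ^ a = w * 2 ^ b"
  shows "b \<le> a \<and> w = 2 ^ (a - b)"
proof -
  have "w \<noteq> 0"
    using assms by (metis mult_zero_left power_not_zero zero_neq_numeral)
  then have "(2::nat) ^ b \<le> 2 ^ a"
    using assms by simp
  then have "b \<le> a"
    by simp
  then have "w * 2 ^ b = 2 ^ (a - b) * 2 ^ b"
    using assms by (simp flip: power_add)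
  with \<open>b \<le> a\<close> show ?thesis
    by simp
qed

locale code_setting = gf2m m \<pi> for m and \<pi> :: "'a::{field,finite}" +
  fixes n d e k :: nat and a0 :: 'a and a :: "nat \<Rightarrow> 'a"
  assumes m_eq: "m = 2 * n" and e_gcd_n: "e = gcd n d" and e_gcd_m: "e = gcd m d"
    and d_pos: "0 < d" and k_pos: "1 \<le> k" and k_le: "k \<le> n div e"
    and a0_in_half: "frob n a0 = a0"
begin

definition shift :: "nat \<Rightarrow> nat" where
  "shift j = (n div e - j) * d"

definition Q :: "'a \<Rightarrow> 'a" where
  "Q x = Qf m n d e k a0 a x"

definition L :: "'a \<Rightarrow> 'a" where
  "L z = frob_inv n (a0 * z)
     + (\<Sum>j\<in>{1..<k}. a j * frob (shift j) z + frob_inv (shift j) (a j * z))"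

definition B :: "'a \<Rightarrow> 'a \<Rightarrow> 'a" where
  "B x z = trace m e (x * L z)"

lemma e_pos: "0 < e"
  using e_gcd_n d_pos by simp

lemma e_dvd_n: "e dvd n"
  unfolding e_gcd_n by simp

lemma e_dvd_m: "e dvd m"
  unfolding e_gcd_m by simp

lemma e_dvd_d: "e dvd d"
  unfolding e_gcd_n by simp

lemma e_dvd_shift: "e dvd shift j"
  using e_dvd_d by (simp add: shift_def)

lemma n_div_e_mult_d_eq: "\<exists>h. (n div e) * d = n + m * h"
proof -
  obtain \<delta> where d: "d = e * \<delta>"
    using e_dvd_d ..
  have "odd \<delta>"
  proof
    assume "even \<delta>"
    then have "2 * e dvd d" and "2 * e dvd m"
      using d m_eq e_dvd_n by auto
    then have "2 * e dvd e"
      using e_gcd_m by simp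
    then show False
      using e_pos by (simp add: dvd_imp_le)
  qed
  then obtain h where "\<delta> = 2 * h + 1"
    by (metis oddE)
  then have "(n div e) * d = n + m * h"
    using d e_dvd_n m_eq by (simp add: algebra_simps)
  then show ?thesis ..
qed

lemma frob_n_mul_d_div_e: "frob (n * d div e) x = frob n (x::'a)"
proof -
  obtain h where "(n div e) * d = n + m * h"
    using n_div_e_mult_d_eq ..
  moreover have "n * d div e = (n div e) * d"
    using e_dvd_n by (metis div_mult_swap mult.commute)
  ultimately show ?thesis
    using frob_add_mult_m[of n h x] by simp
qed

lemma Q_eq: "Q x = trace n e (a0 * x ^ (2 ^ n + 1))
    + (\<Sum>j\<in>{1..<k}. trace m e (a j * x ^ (2 ^ shift j + 1))) + trace m e (a k * x)"
proof -
  have "x ^ (2 ^ (n * d div e) + 1) = x ^ (2 ^ n + 1)"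
    unfolding power_two_pow_plus_one frob_n_mul_d_div_e ..
  then show ?thesis
    by (simp only: Q_def Qf_def shift_def)
qed

lemma Q_polarization: "Q (x + z) = Q x + Q z + B x z"
proof -
  have B_eq: "B x z = trace m e (x * frob_inv n (a0 * z))
      + (\<Sum>j\<in>{1..<k}. trace m e (x * (a j * frob (shift j) z + frob_inv (shift j) (a j * z))))"
    by (simp only: B_def L_def distrib_left trace_add sum_distrib_left trace_sum)
  have "(\<Sum>j\<in>{1..<k}. trace m e (a j * (x + z) ^ (2 ^ shift j + 1)))
      = (\<Sum>j\<in>{1..<k}. trace m e (a j * x ^ (2 ^ shift j + 1)))
        + (\<Sum>j\<in>{1..<k}. trace m e (a j * z ^ (2 ^ shift j + 1)))
        + (\<Sum>j\<in>{1..<k}. trace m e (x * (a j * frob (shift j) z + frob_inv (shift j) (a j * z))))"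
    by (simp only: trace_gold_polarization[OF e_dvd_m e_pos e_dvd_shift] sum.distrib)
  moreover have "trace n e (a0 * (x + z) ^ (2 ^ n + 1))
      = trace n e (a0 * x ^ (2 ^ n + 1)) + trace n e (a0 * z ^ (2 ^ n + 1))
        + trace m e (x * frob_inv n (a0 * z))"
    by (rule trace_half_gold_polarization[OF m_eq e_dvd_n e_pos a0_in_half])
  moreover have "trace m e (a k * (x + z)) = trace m e (a k * x) + trace m e (a k * z)"
    by (simp only: distrib_left trace_add)
  ultimately show ?thesis
    unfolding Q_eq[of "x + z"] Q_eq[of x] Q_eq[of z] B_eq by (simp only: ac_simps)
qed

lemma L_add: "L (y + z) = L y + L z"
  by (simp add: L_def frob_add frob_inv_add sum.distrib algebra_simps)

lemma L_homogeneous: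
  assumes "frob e c = c"
  shows "L (c * z) = c * L z"
  using frob_fixed_dvd[OF assms] frob_inv_fixed_dvd[OF assms] e_dvd_n e_dvd_shift
  by (simp add: L_def frob_mult frob_inv_mult distrib_left sum_distrib_left mult.left_commute)

lemma B_additive: "B x (y + z) = B x y + B x z"
  by (simp add: B_def L_add distrib_left trace_add)

lemma B_homogeneous: "frob e c = c \<Longrightarrow> B x (c * z) = c * B x z"
  by (simp add: B_def L_homogeneous mult.left_commute trace_scalar)

lemma B_symmetric: "B x z = B z x"
  using Q_polarization[of x z] Q_polarization[of z x] by (simp add: ac_simps)

lemma Q_zero: "Q 0 = 0"
  by (simp add: Q_def Qf_def)

lemma B_alternating: "B x x = 0"
  using Q_polarization[of x x] by (simp add: Q_zero)

lemma frob_B: "frob e (B x z) = B x z"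
  unfolding B_def using e_dvd_m e_pos by (intro frob_trace) simp_all

sublocale alternating_form "{c. frob e c = c}" B
proof
  show "B x z = B z x" for x z
    by (rule B_symmetric)
qed (simp_all add: B_additive B_homogeneous B_alternating frob_B frob_inverse)

lemma radical_eq_kernel: "radical UNIV = {z. L z = 0}"
proof -
  obtain y :: 'a where y: "trace m e y \<noteq> 0"
    using exists_trace_ne_0[OF e_dvd_m dvd_refl e_pos] by blast
  have "L z = 0" if "\<forall>x. B x z = 0" for z
  proof (rule ccontr)
    assume "L z \<noteq> 0"
    then have "B (y / L z) z = trace m e y"
      by (simp add: B_def)
    with that y show False by simp
  qed
  then show ?thesis
    by (auto simp: radical_def B_def)
qed

lemma radical_eq_absolute_trace_radical: "radical UNIV = {z. \<forall>x. trace e 1 (B x z) = 0}"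
proof -
  obtain \<mu> :: 'a where \<mu>: "frob e \<mu> = \<mu>" "trace e 1 \<mu> \<noteq> 0"
    using exists_trace_ne_0[of 1 e] e_dvd_m by auto
  have "B x z = 0" if "\<forall>x. trace e 1 (B x z) = 0" for x z
  proof (rule ccontr)
    assume "B x z \<noteq> 0"
    moreover have "frob e (\<mu> / B x z) = \<mu> / B x z"
      using \<mu>(1) frob_B by (simp add: divide_inverse frob_mult frob_inverse)
    ultimately have "B ((\<mu> / B x z) * x) z = \<mu>"
      using homogeneous_left[of "\<mu> / B x z" x z] by simp
    with that \<mu>(2) show False by metis
  qed
  then show ?thesis
    by (auto simp: radical_def)
qed

lemma frob_L_linearized: "is_linearized d (2 * (k - 1)) (\<lambda>z. frob ((k - 1 + n div e) * d) (L z))"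
proof -
  \<comment> \<open>Since \<open>(n/e) d \<equiv> n (mod m)\<close>, raising to the power \<open>2^T\<close> moves the Frobenius exponents
    \<open>-n\<close> and \<open>\<plusminus>(n/e - j) d\<close> of \<open>L\<close> into \<open>d * {0..2(k - 1)}\<close>.\<close>
  define T where "T = (k - 1 + n div e) * d"
  obtain h where h: "(n div e) * d = n + m * h"
    using n_div_e_mult_d_eq ..
  have a0_term: "frob T (frob_inv n (a0 * z)) = frob T (frob_inv n a0) * frob (d * (k - 1)) z" for z
  proof -
    have "T - n = d * (k - 1) + m * h"
      using h by (simp add: T_def algebra_simps)
    moreover have "n \<le> T"
      using h by (simp add: T_def algebra_simps)
    ultimately show ?thesis
      by (simp add: frob_frob_inv frob_mult frob_add_mult_m)
  qed
  have a_term: "frob T (a j * frob (shift j) z) = frob T (a j) * frob (d * (k - 1 - j)) z"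
    if "j \<in> {1..<k}" for j z
  proof -
    have "j \<le> k - 1" "j \<le> n div e"
      using that k_le by auto
    then obtain p q where p: "k - 1 = j + p" and q: "n div e = j + q"
      by (metis le_add_diff_inverse)
    have "T + shift j = d * p + 2 * ((n div e) * d)"
      unfolding T_def shift_def p q by (simp add: algebra_simps)
    also have "\<dots> = d * (k - 1 - j) + m * (2 * h + 1)"
      using h m_eq p by (simp add: algebra_simps)
    finally have "T + shift j = d * (k - 1 - j) + m * (2 * h + 1)" .
    then show ?thesis
      by (simp only: frob_mult frob_frob frob_add_mult_m)
  qed
  have a_inv_term: "frob T (frob_inv (shift j) (a j * z))
      = frob (T - shift j) (a j) * frob (d * (k - 1 + j)) z" if "j \<in> {1..<k}" for j z
  proof -
    have "j \<le> n div e"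
      using that k_le by simp
    then have "shift j \<le> T" and "T - shift j = d * (k - 1 + j)"
      by (auto simp: T_def shift_def algebra_simps simp flip: diff_mult_distrib)
    then show ?thesis
      by (simp add: frob_frob_inv frob_mult)
  qed
  have L_frob: "frob T (L z) = frob T (frob_inv n a0) * frob (d * (k - 1)) z
      + (\<Sum>j\<in>{1..<k}. frob T (a j) * frob (d * (k - 1 - j)) z
          + frob (T - shift j) (a j) * frob (d * (k - 1 + j)) z)" for z
  proof -
    have "frob T (L z) = frob T (frob_inv n (a0 * z))
        + (\<Sum>j\<in>{1..<k}. frob T (a j * frob (shift j) z) + frob T (frob_inv (shift j) (a j * z)))"
      by (simp add: L_def frob_add frob_sum)
    then show ?thesis
      unfolding a0_term by (simp only:) (intro arg_cong2[where f = "(+)"] refl sum.cong,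
          simp_all add: a_term a_inv_term)
  qed
  have "is_linearized d (2 * (k - 1)) (\<lambda>z. frob T (frob_inv n a0) * frob (d * (k - 1)) z
      + (\<Sum>j\<in>{1..<k}. frob T (a j) * frob (d * (k - 1 - j)) z
          + frob (T - shift j) (a j) * frob (d * (k - 1 + j)) z))"
    by (intro is_linearized_add is_linearized_sum is_linearized_monomial) auto
  then show ?thesis
    using L_frob by (simp add: T_def)
qed

lemma card_kernel_L_le:
  assumes "\<exists>z. L z \<noteq> 0"
  shows "card {z. L z = 0} \<le> 2 ^ (2 * e * (k - 1))"
proof -
  obtain c where c: "\<And>z. frob ((k - 1 + n div e) * d) (L z) = linearized d c (2 * (k - 1)) z"
    using frob_L_linearized by (auto simp: is_linearized_def)
  then have "{z. L z = 0} = {z. linearized d c (2 * (k - 1)) z = 0}"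
    by (metis frob_eq_0_iff)
  moreover have "\<exists>z. linearized d c (2 * (k - 1)) z \<noteq> 0"
    using assms c by (metis frob_eq_0_iff)
  ultimately have "card {z. L z = 0} \<le> 2 ^ (gcd m d * (2 * (k - 1)))"
    using card_roots_linearized_le[OF d_pos] by simp
  then show ?thesis
    using e_gcd_m by (simp add: ac_simps)
qed

definition chi :: "'a \<Rightarrow> int" where
  "chi x = sign_bit (trace e 1 (Q x))"

lemma frob_Q: "frob e (Q x) = Q x"
proof -
  have "frob n (frob n x) = x"
    by (metis frob_frob frob_m m_eq mult_2)
  then have "frob n (a0 * x ^ (2 ^ n + 1)) = a0 * x ^ (2 ^ n + 1)"
    unfolding power_two_pow_plus_one by (simp add: frob_mult a0_in_half mult.commute)
  then have "frob e (trace n e (a0 * x ^ (2 ^ n + 1))) = trace n e (a0 * x ^ (2 ^ n + 1))"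
    by (rule frob_trace[OF e_dvd_n e_pos])
  moreover have "frob e (trace m e y) = trace m e y" for y :: 'a
    by (rule frob_trace[OF e_dvd_m e_pos]) simp
  ultimately show ?thesis
    by (simp add: Q_eq frob_add frob_sum)
qed

lemma Q_bit: "trace e 1 (Q x) = 0 \<or> trace e 1 (Q x) = 1"
  using trace_bit[OF frob_Q e_pos] .

lemma sum_chi_cases:
  "(\<Sum>x\<in>UNIV. chi x) = 0
    \<or> ((\<Sum>x\<in>UNIV. chi x)\<^sup>2 = 2 ^ m * int (card {z. L z = 0}) \<and> (\<forall>z. L z = 0 \<longrightarrow> chi z = 1))"
proof -
  have B_bit: "trace e 1 (B x z) = 0 \<or> trace e 1 (B x z) = 1" for x z
    using trace_bit[OF frob_B e_pos] .
  have polarization_chi: "polarization chi x z = sign_bit (trace e 1 (B x z))" for x z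
  proof -
    have "chi (x + z) = chi x * chi z * sign_bit (trace e 1 (B x z))"
      using Q_bit[of x] Q_bit[of z] B_bit[of x z]
      by (auto simp: chi_def Q_polarization trace_add sign_bit_def)
    moreover have "chi y * chi y = 1" for y
      by (simp add: chi_def sign_bit_def)
    ultimately show ?thesis
      by (simp add: polarization_def algebra_simps)
  qed
  have "polarization chi (x + y) z = polarization chi x z * polarization chi y z" for x y z
  proof -
    have "B (x + y) z = B x z + B y z"
      by (rule additive_left)
    then show ?thesis
      using sign_bit_add[OF B_bit[of x z] B_bit[of y z]] by (simp add: polarization_chi trace_add)
  qed
  moreover have "{z. \<forall>x. polarization chi x z = 1} = {z. L z = 0}"
    using B_bit
    by (auto simp: polarization_chi sign_bit_def radical_eq_kernel[symmetric]
        radical_eq_absolute_trace_radical)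
  moreover have "chi x = 1 \<or> chi x = -1" for x
    by (simp add: chi_def sign_bit_def)
  ultimately show ?thesis
    using sum_quadratic_sign[of chi] by (simp add: card_UNIV)
qed

lemma card_kernel_L_eq: "\<exists>j. card {z. L z = 0} = 2 ^ (2 * e * j)"
proof -
  obtain s where "card (UNIV :: 'a set) = card {z. L z = 0} * card {c::'a. frob e c = c} ^ (2 * s)"
    using card_subspace_eq_radical_times_square[of UNIV] radical_eq_kernel
    by (auto simp: subspace_def)
  then have "(2::nat) ^ m = card {z. L z = 0} * 2 ^ (2 * e * s)"
    by (simp add: card_UNIV card_frob_fixed[OF e_dvd_m e_pos] power_mult[symmetric] ac_simps)
  then have "card {z. L z = 0} = 2 ^ (m - 2 * e * s)"
    using power_two_eq_mult_power_two by blast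
  moreover have "m = 2 * e * (n div e)"
    using e_dvd_n m_eq by simp
  ultimately have "card {z. L z = 0} = 2 ^ (2 * e * (n div e - s))"
    by (simp add: diff_mult_distrib2)
  then show ?thesis ..
qed

theorem sum_chi_values:
  assumes "\<exists>x. trace e 1 (Q x) \<noteq> 0"
  shows "(\<Sum>x\<in>UNIV. chi x) \<in> {0} \<union> {s * 2 ^ (n + j * e) | s j. s \<in> {1, -1} \<and> j < k}"
proof (cases "(\<Sum>x\<in>UNIV. chi x) = 0")
  case False
  define S where "S = (\<Sum>x\<in>UNIV. chi x)"
  have S: "S\<^sup>2 = 2 ^ m * int (card {z. L z = 0})" and chi_kernel: "\<And>z. L z = 0 \<Longrightarrow> chi z = 1"
    using sum_chi_cases False by (auto simp: S_def)
  obtain x where "trace e 1 (Q x) \<noteq> 0"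
    using assms ..
  then have "chi x = -1"
    using Q_bit[of x] by (simp add: chi_def sign_bit_def)
  then have "\<exists>z. L z \<noteq> 0"
    using chi_kernel by (intro exI[of _ x]) auto
  then have W_le: "card {z. L z = 0} \<le> 2 ^ (2 * e * (k - 1))"
    by (rule card_kernel_L_le)
  obtain j where W_eq: "card {z. L z = 0} = 2 ^ (2 * e * j)"
    using card_kernel_L_eq ..
  have "j < k"
    using W_le W_eq e_pos k_pos by (simp add: power_le_imp_le_exp)
  have "S\<^sup>2 = 2 ^ (m + 2 * e * j)"
    using S W_eq by (simp add: power_add)
  also have "m + 2 * e * j = (n + j * e) * 2"
    using m_eq by simp
  finally have "S\<^sup>2 = (2 ^ (n + j * e))\<^sup>2"
    by (simp only: power_mult)
  then have "S = 1 * 2 ^ (n + j * e) \<or> S = -1 * 2 ^ (n + j * e)"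
    by (simp add: power2_eq_iff)
  with \<open>j < k\<close> show ?thesis
    unfolding S_def by blast
qed simp

end

theorem theorem1p1:
  fixes m n d e k :: nat and \<pi> :: "'a::{field,finite}" and c :: "bool list"
  assumes "m > 0" "n > 0" "d > 0" "e > 0" "k > 0"
    and "m = 2 * n" and "e = gcd n d" and "e = gcd m d"
    and "1 \<le> k" and "k \<le> n div e"
    and "card (UNIV :: 'a set) = 2 ^ m"
    and "primitive_elem \<pi>"
    and "c \<in> code m n d e k \<pi>"
    and "True \<in> set c"
  shows "DC c \<in> {-1} \<union> {-1 + s * 2 ^ (m div 2 + j * e) | s j. s \<in> {1, -1} \<and> j < k}"
proof -
  obtain a0 a where "a0 ^ 2 ^ n = a0" and c: "c = codeword m n d e k \<pi> a0 a"
    using assms(13) by (auto simp: code_def)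
  then interpret code_setting m \<pi> n d e k a0 a
    using assms by unfold_locales (simp_all add: frob_def)
  have "DC c = (\<Sum>i<2 ^ m - 1. chi (inverse \<pi> ^ i))"
    by (simp add: DC_def c codeword_def chi_def Q_def sign_bit_def interv_sum_list_conv_sum_set_nat
        atLeast0LessThan comp_def)
  also have "\<dots> = (\<Sum>x\<in>UNIV. chi x) - 1"
    using sum_inverse_primitive_powers[of chi] by (simp add: chi_def Q_zero sign_bit_def)
  finally have DC_eq: "DC c = (\<Sum>x\<in>UNIV. chi x) - 1" .
  obtain i where "trace e 1 (Q (inverse \<pi> ^ i)) = 1"
    using assms(14) by (auto simp: c codeword_def Q_def)
  then have "\<exists>x. trace e 1 (Q x) \<noteq> 0"
    by (metis one_neq_zero)
  then have "(\<Sum>x\<in>UNIV. chi x) \<in> {0} \<union> {s * 2 ^ (n + j * e) | s j. s \<in> {1, -1} \<and> j < k}"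
    by (rule sum_chi_values)
  then show ?thesis
    using DC_eq \<open>m = 2 * n\<close> by auto
qed

end
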